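(* Consider the networked SIR model with isolation on an undirected graph with nodes $\{1,\dots,n\}$ and adjacency matrix $A=(a_{ij})$, with fixed natural recovery rates $\delta_i>0$, infection rates $\beta_i$ and isolation times following phase-type distributions $(u_1,\Pi_i)$, where $\Pi_i\in\mathbb R^{p\times p}$ is parametrized by positive variables $\gamma_i=(\gamma_{i1},\dots,\gamma_{iq_i})$. Let a set of initially infected nodes, a budget $\bar C>0$, a level $\bar\lambda>0$, intervals $[\underline\beta_i,\bar\beta_i]\subset(0,\infty)$, boxes $\prod_{k=1}^{q_i}[\underline\gamma_{ik},\bar\gamma_{ik}]$ and cost functions $g_i,h_i$ be given. Let $w_i=-\Pi_i\mathbf 1_p$ and let $\mathcal D\Pi_i$, $\mathcal O\Pi_i$ denote the diagonal and off-diagonal parts of $\Pi_i$. Assume that for all $i$: (1) the entries of $w_i$ and of $\mathcal O\Pi_i$ are posynomials in $\gamma_i$; (2) the entries of $-\mathcal D\Pi_i$ are monomials in $\gamma_i$; (3) $g_i$ is a posynomial in $\beta_i$ and $h_i$ is a posynomial in $\gamma_i$. Let $\kappa_{i\ell}>0$, $\alpha_{i\ell}>0$ ($i\in[n]$, $\ell\in[p]$) be constants with $\kappa_{i\ell}(-\Pi_{i,\ell\ell})^{\alpha_{i\ell}}\le(-\Pi_{i,\ell\ell})+\delta_i$ for all possible values of $\gamma_i$. Let $J,B,D$ be the $n\times n$ diagonal matrices with $J_{ii}=S_i(0)$, $B_{ii}=\beta_i$, $D_{ii}=\delta_i$. Suppose $\beta_1,\dots,\beta_n,\gamma_1,\dots,\gamma_n$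 and an entrywise positive $v\in\mathbb R^{np}$ satisfy the posynomial constraints $$v^\top\Big(\bigoplus_{i=1}^n(\mathcal O\Pi_i)^\top+(JBA)\otimes(u_1\mathbf 1_p^\top)\Big)+\mathbf 1_n^\top\bigoplus_{i=1}^n w_i^\top+\mathbf 1_n^\top(D\otimes\mathbf 1_p^\top)<v^\top\bigoplus_{i=1}^n\bigoplus_{\ell=1}^p\kappa_{i\ell}(-\Pi_{i,\ell\ell})^{\alpha_{i\ell}},$$ $$\sum_{i=1}^n\big(g_i(\beta_i)+h_i(\gamma_i)\big)\le\bar C,\quad v^\top\tilde I(0)<\bar\lambda+\sigma_I(0),\quad \underline\beta_i\le\beta_i\le\bar\beta_i,\quad \gamma_i\in\prod_{k=1}^{q_i}[\underline\gamma_{ik},\bar\gamma_{ik}].$$ Then these parameters solve the resource allocation problem with isolation, i.e., the bound and budget constraints hold and the resulting SIR model with isolation satisfies $\lambda\le\bar\lambda$.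
   Context: Phase-type distribution $(\phi,\Pi)$: the distribution of the absorption time of a continuous-time Markov process on states $1,\dots,p+1$ ($1,\dots,p$ transient, $p+1$ absorbing) with generator $\begin{bmatrix}\Pi&w\\0&0\end{bmatrix}$, $w=-\Pi\mathbf 1_p$, $\Pi$ an invertible Metzler matrix with nonpositive row sums, and initial distribution $(\phi,0)$. SIR model with isolation: each node $i$ is at each time in exactly one of the states susceptible, infected, removed, with $\{0,1\}$-indicators $S_i(t),I_i(t),R_i(t)$. A susceptible node $i$ becomes infected with instantaneous rate $\beta_i\sum_j a_{ij}I_j(t)$. Once node $i$ becomes infected, it is removed after a time $\min(X_i,Y_i)$, where $X_i$ is exponential with rate $\delta_i$, $Y_i$ follows the phase-type distribution $(u_1,\Pi_i)$, independent of each other and of the rest of the process; removed nodes stay removed. At time $0$ each node is either susceptible or infected. $\sigma_I(t),\sigma_R(t)$ are the numbers of infected and removed nodes at time $t$; $\lambda=\lim_{t\to\infty}E[\sigma_R(t)]-\sigma_I(0)$. $\tilde I(0)\in\mathbb R^{np}$ stacks $\tilde I_i(0)=u_1$ if $i$ is initially infected and $0$ otherwise. A monomial in positive variables is $cx_1^{a_1}\cdots x_m^{a_m}$, $c>0$, $a_k\in\mathbb R$; a posynomial is a finite sum of monomials. $u_1$ is the first canonical basis vector of $\mathbb R^p$, $\mathbf 1_k$ the all-ones vector, $\otimes$ the Kronecker product, $\bigoplus$ the block-diagonal direct sum, $[n]=\{1,\dots,n\}$; vector inequalities are entrywise. *)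

theory Defs
  imports "HOL-Analysis.Analysis"
begin

(* Matrices are functions nat => nat => real with explicit dimensions; indices are 0-based.
   Node i in {0..<n}, phase l in {0..<p}; the stacked index of (i,l) is i*p + l.
   u_1 is the phase 0. *)

type_synonym mat = "nat \<Rightarrow> nat \<Rightarrow> real"

definition mmul :: "nat \<Rightarrow> mat \<Rightarrow> mat \<Rightarrow> mat" where
  "mmul k A B = (\<lambda>i j. \<Sum>l<k. A i l * B l j)"

definition diagm :: "(nat \<Rightarrow> real) \<Rightarrow> mat" where
  "diagm d = (\<lambda>i j. if i = j then d i else 0)"

definition mT :: "mat \<Rightarrow> mat" where
  "mT M = (\<lambda>i j. M j i)"

definition madd :: "mat \<Rightarrow> mat \<Rightarrow> mat" where
  "madd A B = (\<lambda>i j. A i j + B i j)"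

(* Kronecker product A \<otimes> B where B is an r x c matrix *)
definition kron :: "nat \<Rightarrow> nat \<Rightarrow> mat \<Rightarrow> mat \<Rightarrow> mat" where
  "kron r c A B = (\<lambda>i j. A (i div r) (j div c) * B (i mod r) (j mod c))"

(* block-diagonal direct sum of the r x c blocks F 0, F 1, ... *)
definition dsum :: "nat \<Rightarrow> nat \<Rightarrow> (nat \<Rightarrow> mat) \<Rightarrow> mat" where
  "dsum r c F = (\<lambda>i j. if i div r = j div c then F (i div r) (i mod r) (j mod c) else 0)"

definition vmul :: "nat \<Rightarrow> (nat \<Rightarrow> real) \<Rightarrow> mat \<Rightarrow> nat \<Rightarrow> real" where
  "vmul k v M = (\<lambda>j. \<Sum>i<k. v i * M i j)"

definition ones :: "nat \<Rightarrow> real" where "ones = (\<lambda>_. 1)"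
definition u1 :: "nat \<Rightarrow> real" where "u1 = (\<lambda>l. if l = 0 then 1 else 0)"
definition outer :: "(nat \<Rightarrow> real) \<Rightarrow> (nat \<Rightarrow> real) \<Rightarrow> mat" where
  "outer x y = (\<lambda>i j. x i * y j)"

(* off-diagonal part; w = - Pm 1_p *)
definition offdiag :: "mat \<Rightarrow> mat" where
  "offdiag M = (\<lambda>i j. if i = j then 0 else M i j)"
definition exitvec :: "nat \<Rightarrow> mat \<Rightarrow> nat \<Rightarrow> real" where
  "exitvec p M = (\<lambda>l. - (\<Sum>m<p. M l m))"

definition invertible_mat :: "nat \<Rightarrow> mat \<Rightarrow> bool" where
  "invertible_mat p M \<longleftrightarrow> (\<exists>N. \<forall>i<p. \<forall>j<p. (\<Sum>k<p. M i k * N k j) = (if i = j then 1 else 0))"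

definition monomial_fun :: "nat \<Rightarrow> ((nat \<Rightarrow> real) \<Rightarrow> real) \<Rightarrow> bool" where
  "monomial_fun q f \<longleftrightarrow> (\<exists>c a. c > 0 \<and>
     (\<forall>x. (\<forall>k<q. x k > 0) \<longrightarrow> f x = c * (\<Prod>k<q. x k powr a k)))"

definition posynomial_fun :: "nat \<Rightarrow> ((nat \<Rightarrow> real) \<Rightarrow> real) \<Rightarrow> bool" where
  "posynomial_fun q f \<longleftrightarrow> (\<exists>cs :: (real \<times> (nat \<Rightarrow> real)) list. (\<forall>(c,a)\<in>set cs. c > 0) \<and>
     (\<forall>x. (\<forall>k<q. x k > 0) \<longrightarrow> f x = (\<Sum>(c,a)\<leftarrow>cs. c * (\<Prod>k<q. x k powr a k))))"

(* local node state: susceptible, infected in isolation phase l, removed *)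
datatype lstate = Sus | Inf nat | Rem

definition sir_states :: "nat \<Rightarrow> nat \<Rightarrow> (nat \<Rightarrow> lstate) set" where
  "sir_states n p = {x. (\<forall>i<n. \<forall>l. x i = Inf l \<longrightarrow> l < p) \<and> (\<forall>i. n \<le> i \<longrightarrow> x i = Rem)}"

definition is_inf :: "lstate \<Rightarrow> real" where
  "is_inf s = (case s of Inf _ \<Rightarrow> 1 | _ \<Rightarrow> 0)"

(* The removal time min(X_i,Y_i) is handled by: phase l -> phase m at rate Pi_i(l,m),
   phase l -> removed at rate w_i(l) + delta_i (absorption of Y_i or firing of X_i). *)
definition node_rate :: "nat \<Rightarrow> nat \<Rightarrow> mat \<Rightarrow> (nat \<Rightarrow> real) \<Rightarrow> (nat \<Rightarrow> real)
     \<Rightarrow> (nat \<Rightarrow> mat) \<Rightarrow> (nat \<Rightarrow> lstate) \<Rightarrow> nat \<Rightarrow> lstate \<Rightarrow> real" where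
  "node_rate n p A beta delta Pm x i s' =
     (case x i of
        Sus \<Rightarrow> (case s' of Inf m \<Rightarrow> (if m = 0 then beta i * (\<Sum>j<n. A i j * is_inf (x j)) else 0)
                         | _ \<Rightarrow> 0)
      | Inf l \<Rightarrow> (case s' of Inf m \<Rightarrow> (if m \<noteq> l then Pm i l m else 0)
                           | Rem \<Rightarrow> exitvec p (Pm i) l + delta i
                           | Sus \<Rightarrow> 0)
      | Rem \<Rightarrow> 0)"

definition sir_rate :: "nat \<Rightarrow> nat \<Rightarrow> mat \<Rightarrow> (nat \<Rightarrow> real) \<Rightarrow> (nat \<Rightarrow> real)
     \<Rightarrow> (nat \<Rightarrow> mat) \<Rightarrow> (nat \<Rightarrow> lstate) \<Rightarrow> (nat \<Rightarrow> lstate) \<Rightarrow> real" where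
  "sir_rate n p A beta delta Pm x y =
     (if x \<noteq> y \<and> (\<exists>i<n. y = x(i := y i))
      then node_rate n p A beta delta Pm x (THE i. i < n \<and> x i \<noteq> y i) (y (THE i. i < n \<and> x i \<noteq> y i))
      else 0)"

definition sir_gen :: "nat \<Rightarrow> nat \<Rightarrow> mat \<Rightarrow> (nat \<Rightarrow> real) \<Rightarrow> (nat \<Rightarrow> real)
     \<Rightarrow> (nat \<Rightarrow> mat) \<Rightarrow> (nat \<Rightarrow> lstate) \<Rightarrow> (nat \<Rightarrow> lstate) \<Rightarrow> real" where
  "sir_gen n p A beta delta Pm x y =
     (if x = y then - (\<Sum>z\<in>sir_states n p - {x}. sir_rate n p A beta delta Pm x z)
      else sir_rate n p A beta delta Pm x y)"

fun gpow :: "'s set \<Rightarrow> ('s \<Rightarrow> 's \<Rightarrow> real) \<Rightarrow> nat \<Rightarrow> 's \<Rightarrow> 's \<Rightarrow> real" where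
  "gpow S Q 0 x y = (if x = y then 1 else 0)"
| "gpow S Q (Suc k) x y = (\<Sum>z\<in>S. gpow S Q k x z * Q z y)"

definition ctmc_trans :: "'s set \<Rightarrow> ('s \<Rightarrow> 's \<Rightarrow> real) \<Rightarrow> real \<Rightarrow> 's \<Rightarrow> 's \<Rightarrow> real" where
  "ctmc_trans S Q t x y = (\<Sum>k. t ^ k / fact k * gpow S Q k x y)"

definition sir_init :: "nat \<Rightarrow> nat set \<Rightarrow> nat \<Rightarrow> lstate" where
  "sir_init n I0 = (\<lambda>i. if n \<le> i then Rem else if i \<in> I0 then Inf 0 else Sus)"

definition sir_ERem :: "nat \<Rightarrow> nat \<Rightarrow> mat \<Rightarrow> (nat \<Rightarrow> real) \<Rightarrow> (nat \<Rightarrow> real)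
     \<Rightarrow> (nat \<Rightarrow> mat) \<Rightarrow> nat set \<Rightarrow> real \<Rightarrow> real" where
  "sir_ERem n p A beta delta Pm I0 t =
     (\<Sum>y\<in>sir_states n p.
        ctmc_trans (sir_states n p) (sir_gen n p A beta delta Pm) t (sir_init n I0) y
        * real (card {i. i < n \<and> y i = Rem}))"

end

theory Submission
  imports Defs
begin

text \<open>Uniformization: if \<open>c\<close> exceeds every exit rate, then \<open>K = Q + c I\<close> is nonnegative and
  \<open>exp (t Q) = exp (-c t) exp (t K)\<close>, so \<open>E[\<sigma>\<^sub>R(t)]\<close> is a Poisson average of the means
  \<open>m\<^sub>j = (K\<^sup>j \<sigma>\<^sub>R)(x\<^sub>0)\<close>. Removal is irreversible, so \<open>\<sigma>\<^sub>R\<close> is \<open>K\<close>-subharmonic and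
  \<open>m\<^sub>j / c\<^sup>j\<close> increases. The posynomial constraint, weakened by
  \<open>\<kappa>(-\<Pi>\<^sub>l\<^sub>l)\<^sup>\<alpha> \<le> -\<Pi>\<^sub>l\<^sub>l + \<delta>\<close>, says exactly that \<open>V = \<sigma>\<^sub>R + v\<^sup>T I\<close> (with \<open>I\<close> the stacked
  phase indicators) has nonpositive drift on the states in which no initially infected node is
  susceptible; these are the only reachable states, so \<open>m\<^sub>j / c\<^sup>j \<le> V(x\<^sub>0)\<close>, which is \<open>v\<^sup>T\<close>
  applied to the stacked initial infections. The Poisson averages of an increasing bounded sequence
  converge to its limit, so \<open>\<lambda> \<le> V(x\<^sub>0) - \<sigma>\<^sub>I(0)\<close>, and the last constraint bounds this by
  the prescribed level.\<close>

section \<open>Matrix powers and uniformization\<close>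

definition diag_shift :: "('s \<Rightarrow> 's \<Rightarrow> real) \<Rightarrow> real \<Rightarrow> 's \<Rightarrow> 's \<Rightarrow> real" where
  "diag_shift Q c x y = Q x y + (if x = y then c else 0)"

lemma diag_shift_col_sum:
  assumes "finite S" "y \<in> S"
  shows "(\<Sum>z\<in>S. f z * diag_shift Q c z y) = (\<Sum>z\<in>S. f z * Q z y) + c * f y"
proof -
  have "(\<Sum>z\<in>S. f z * diag_shift Q c z y) = (\<Sum>z\<in>S. f z * Q z y + (if z = y then c * f z else 0))"
    by (intro sum.cong) (auto simp: diag_shift_def algebra_simps)
  then show ?thesis
    using assms by (simp add: sum.distrib)
qed

lemma diag_shift_row_sum:
  assumes "finite S" "x \<in> S"
  shows "(\<Sum>y\<in>S. diag_shift Q c x y * f y) = c * f x + (\<Sum>y\<in>S. Q x y * f y)"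
proof -
  have "(\<Sum>y\<in>S. diag_shift Q c x y * f y) = (\<Sum>y\<in>S. Q x y * f y + (if x = y then c * f y else 0))"
    by (intro sum.cong) (auto simp: diag_shift_def algebra_simps)
  then show ?thesis
    using assms by (simp add: sum.distrib)
qed

lemma binomial_sum_Suc:
  fixes d :: "'a :: comm_ring_1" and s :: "nat \<Rightarrow> 'a"
  shows "(\<Sum>j\<le>k. of_nat (k choose j) * d^(k-j) * s (Suc j)) + d * (\<Sum>j\<le>k. of_nat (k choose j) * d^(k-j) * s j)
       = (\<Sum>j\<le>Suc k. of_nat (Suc k choose j) * d^(Suc k - j) * s j)"
proof -
  have "d * (\<Sum>j\<le>k. of_nat (k choose j) * d^(k-j) * s j) = (\<Sum>j\<le>k. of_nat (k choose j) * d^(Suc k - j) * s j)"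
    unfolding sum_distrib_left by (rule sum.cong) (auto simp: Suc_diff_le)
  also have "\<dots> = (\<Sum>j\<le>Suc k. of_nat (k choose j) * d^(Suc k - j) * s j)"
    by (simp add: binomial_eq_0)
  also have "\<dots> = d^(Suc k) * s 0 + (\<Sum>j\<le>k. of_nat (k choose Suc j) * d^(k - j) * s (Suc j))"
    by (subst sum.atMost_Suc_shift) simp
  moreover have "(\<Sum>j\<le>Suc k. of_nat (Suc k choose j) * d^(Suc k - j) * s j)
      = d^(Suc k) * s 0 + (\<Sum>j\<le>k. (of_nat (k choose j) + of_nat (k choose Suc j)) * d^(k - j) * s (Suc j))"
    by (subst sum.atMost_Suc_shift) simp
  ultimately show ?thesis
    by (simp add: algebra_simps sum.distrib)
qed

text \<open>Since \<open>Q\<close> and the identity commute, \<open>Q\<^sup>k = ((Q + c I) - c I)\<^sup>k\<close> expands binomially.\<close>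

lemma gpow_diag_shift_binomial:
  assumes S: "finite S" and y: "y \<in> S"
  shows "gpow S Q k x y = (\<Sum>j\<le>k. of_nat (k choose j) * (-c)^(k-j) * gpow S (diag_shift Q c) j x y)"
  using y
proof (induction k arbitrary: y)
  case 0
  then show ?case by simp
next
  case (Suc k)
  let ?K = "diag_shift Q c"
  have "gpow S Q (Suc k) x y
      = (\<Sum>j\<le>k. of_nat (k choose j) * (-c)^(k-j) * (\<Sum>z\<in>S. gpow S ?K j x z * Q z y))"
    using Suc.IH by (simp add: sum_distrib_right sum_distrib_left mult.assoc sum.swap[of _ S])
  also have "\<dots> = (\<Sum>j\<le>k. of_nat (k choose j) * (-c)^(k-j) * (gpow S ?K (Suc j) x y - c * gpow S ?K j x y))"
    using diag_shift_col_sum[OF S Suc.prems] by simp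
  also have "\<dots> = (\<Sum>j\<le>k. of_nat (k choose j) * (-c)^(k-j) * gpow S ?K (Suc j) x y)
       + (-c) * (\<Sum>j\<le>k. of_nat (k choose j) * (-c)^(k-j) * gpow S ?K j x y)"
    by (simp only: sum_distrib_left flip: sum.distrib) (rule sum.cong, simp_all add: algebra_simps)
  also have "\<dots> = (\<Sum>j\<le>Suc k. of_nat (Suc k choose j) * (-c)^(Suc k-j) * gpow S ?K j x y)"
    by (rule binomial_sum_Suc)
  finally show ?case .
qed

lemma gpow_nonneg:
  assumes "\<forall>z\<in>S. \<forall>w\<in>S. K z w \<ge> 0" "y \<in> S"
  shows "gpow S K j x y \<ge> 0"
  using assms(2) by (induction j arbitrary: y) (use assms(1) in \<open>auto intro!: sum_nonneg\<close>)

lemma gpow_abs_le: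
  assumes "\<forall>z\<in>S. \<forall>w\<in>S. \<bar>K z w\<bar> \<le> B" "0 \<le> B" "y \<in> S"
  shows "\<bar>gpow S K j x y\<bar> \<le> (real (card S) * B + 1)^j"
  using assms(3)
proof (induction j arbitrary: y)
  case 0
  then show ?case by simp
next
  case (Suc j)
  let ?M = "real (card S) * B + 1"
  have "\<bar>gpow S K (Suc j) x y\<bar> \<le> (\<Sum>z\<in>S. \<bar>gpow S K j x z * K z y\<bar>)"
    by (simp add: sum_abs)
  also have "\<dots> \<le> (\<Sum>z\<in>S. ?M^j * B)"
    using Suc assms(1,2) by (intro sum_mono) (auto simp: abs_mult intro!: mult_mono)
  also have "\<dots> = real (card S) * B * ?M^j"
    by simp
  also have "\<dots> \<le> ?M * ?M^j"
    using assms(2) by (intro mult_right_mono) auto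
  finally show ?case by simp
qed

lemma gpow_exp_bounded:
  assumes "finite S" "y \<in> S"
  obtains M where "\<And>j. \<bar>gpow S K j x y\<bar> \<le> M^j"
proof
  let ?B = "\<Sum>z\<in>S. \<Sum>w\<in>S. \<bar>K z w\<bar>"
  have "\<forall>z\<in>S. \<forall>w\<in>S. \<bar>K z w\<bar> \<le> ?B"
    using assms(1) by (auto intro!: member_le_sum order.trans[OF _ member_le_sum[where f="\<lambda>z. \<Sum>w\<in>S. \<bar>K z w\<bar>"]] sum_nonneg)
  then show "\<bar>gpow S K j x y\<bar> \<le> (real (card S) * ?B + 1)^j" for j
    using assms(2) by (intro gpow_abs_le) (auto intro: sum_nonneg)
qed

lemma summable_norm_exp_dominated:
  fixes f :: "nat \<Rightarrow> real"
  assumes "\<And>n. \<bar>f n\<bar> \<le> r^n / fact n"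
  shows "summable (\<lambda>n. norm (f n))"
proof (rule summable_comparison_test'[of "\<lambda>n. inverse (fact n) * r^n"])
  show "summable (\<lambda>n. inverse (fact n) * r^n)"
    by (rule summable_exp)
  show "norm (norm (f n)) \<le> inverse (fact n) * r^n" for n
    using assms[of n] by (simp add: divide_inverse mult.commute)
qed

lemma summable_norm_gpow_series:
  assumes "finite S" "y \<in> S"
  shows "summable (\<lambda>j. norm (t^j / fact j * gpow S K j x y))"
proof -
  obtain M where M: "\<And>j. \<bar>gpow S K j x y\<bar> \<le> M^j"
    using gpow_exp_bounded[OF assms] by blast
  show ?thesis
  proof (rule summable_norm_exp_dominated)
    fix j
    have "\<bar>t^j / fact j * gpow S K j x y\<bar> = \<bar>t\<bar>^j / fact j * \<bar>gpow S K j x y\<bar>"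
      by (simp add: abs_mult power_abs)
    also have "\<dots> \<le> \<bar>t\<bar>^j / fact j * M^j"
      by (intro mult_left_mono M) auto
    finally
    show "\<bar>t^j / fact j * gpow S K j x y\<bar> \<le> (\<bar>t\<bar> * M)^j / fact j"
      by (simp add: power_mult_distrib)
  qed
qed

lemma exp_real_sums: "(\<lambda>n. x^n / fact n) sums exp (x::real)"
  using exp_converges[of x] by (simp add: divide_inverse mult.commute)

text \<open>Uniformization: \<open>exp (t Q) = exp (-c t) exp (t (Q + c I))\<close>, as the Cauchy product of the two series.\<close>

lemma ctmc_trans_diag_shift:
  assumes S: "finite S" and y: "y \<in> S"
  shows "ctmc_trans S Q t x y = exp (-c*t) * (\<Sum>j. t^j / fact j * gpow S (diag_shift Q c) j x y)"
proof -
  let ?K = "diag_shift Q c"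
  define a where "a i = (-c*t)^i / fact i" for i
  define b where "b j = t^j / fact j * gpow S ?K j x y" for j
  have sa: "summable (\<lambda>i. norm (a i))"
    by (rule summable_norm_exp_dominated[where r="\<bar>c*t\<bar>"]) (simp add: a_def abs_mult power_abs)
  have sb: "summable (\<lambda>j. norm (b j))"
    unfolding b_def by (rule summable_norm_gpow_series[OF S y])
  have coeff: "t^k / fact k * gpow S Q k x y = (\<Sum>i\<le>k. a i * b (k - i))" for k
  proof -
    have "t^k / fact k * gpow S Q k x y = (\<Sum>j\<le>k. a (k - j) * b j)"
      unfolding gpow_diag_shift_binomial[OF S y, of Q k x c] sum_distrib_left
    proof (rule sum.cong)
      fix j assume "j \<in> {..k}"
      then have jk: "j \<le> k" by simp
      have "t^k = t^(k-j) * t^j"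
        using jk by (simp flip: power_add)
      moreover have "(-c*t)^(k-j) = (-c)^(k-j) * t^(k-j)"
        by (rule power_mult_distrib)
      ultimately show "t^k / fact k * (of_nat (k choose j) * (-c)^(k-j) * gpow S ?K j x y) = a (k - j) * b j"
        unfolding a_def b_def binomial_fact[OF jk] by (simp add: field_simps)
    qed simp
    also have "\<dots> = (\<Sum>i\<le>k. a i * b (k - i))"
      by (rule sum.reindex_bij_witness[where i="\<lambda>i. k - i" and j="\<lambda>i. k - i"]) auto
    finally show ?thesis .
  qed
  have "ctmc_trans S Q t x y = (\<Sum>k. \<Sum>i\<le>k. a i * b (k - i))"
    unfolding ctmc_trans_def coeff ..
  also have "\<dots> = (\<Sum>i. a i) * (\<Sum>j. b j)"
    using Cauchy_product[OF sa sb] by simp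
  also have "(\<Sum>i. a i) = exp (-c*t)"
    unfolding a_def by (rule sums_unique[OF exp_real_sums, symmetric])
  finally show ?thesis unfolding b_def .
qed

lemma ctmc_expectation_diag_shift:
  assumes S: "finite S"
  shows "(\<Sum>y\<in>S. ctmc_trans S Q t x y * f y)
       = exp (-c*t) * (\<Sum>j. t^j / fact j * (\<Sum>y\<in>S. gpow S (diag_shift Q c) j x y * f y))"
proof -
  let ?u = "\<lambda>y j. t^j / fact j * gpow S (diag_shift Q c) j x y * f y"
  have summable_u: "summable (?u y)" if "y \<in> S" for y
    by (rule summable_mult2[OF summable_norm_cancel[OF summable_norm_gpow_series[OF S that]]])
  have "(\<Sum>y\<in>S. ctmc_trans S Q t x y * f y) = (\<Sum>y\<in>S. exp (-c*t) * (\<Sum>j. ?u y j))"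
  proof (rule sum.cong)
    fix y assume y: "y \<in> S"
    show "ctmc_trans S Q t x y * f y = exp (-c*t) * (\<Sum>j. ?u y j)"
      unfolding ctmc_trans_diag_shift[OF S y, of Q t x c]
      using suminf_mult2[OF summable_norm_cancel[OF summable_norm_gpow_series[OF S y,
            where t=t and K="diag_shift Q c" and x=x]], of "f y"]
      by simp
  qed simp
  also have "\<dots> = exp (-c*t) * (\<Sum>y\<in>S. \<Sum>j. ?u y j)"
    by (rule sum_distrib_left[symmetric])
  also have "(\<Sum>y\<in>S. \<Sum>j. ?u y j) = (\<Sum>j. \<Sum>y\<in>S. ?u y j)"
    using summable_u by (rule suminf_sum[symmetric])
  also have "\<dots> = (\<Sum>j. t^j / fact j * (\<Sum>y\<in>S. gpow S (diag_shift Q c) j x y * f y))"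
    by (simp only: sum_distrib_left mult.assoc)
  finally show ?thesis .
qed

section \<open>Poisson averages\<close>

lemma poisson_mass_below_tendsto_0:
  fixes c :: real
  assumes c: "c > 0"
  shows "((\<lambda>t. exp (-c*t) * (\<Sum>j<N. (c*t)^j / fact j)) \<longlongrightarrow> 0) at_top"
proof -
  have ct: "filterlim (\<lambda>t::real. c * t) at_top at_top"
    by (rule filterlim_tendsto_pos_mult_at_top[OF tendsto_const c filterlim_ident])
  have "((\<lambda>t. (c*t)^j / exp (c*t) / fact j) \<longlongrightarrow> 0) at_top" for j
    using tendsto_divide[OF filterlim_compose[OF tendsto_power_div_exp_0[of j] ct] tendsto_const[of "fact j"]]
    by simp
  then have "((\<lambda>t. \<Sum>j<N. (c*t)^j / exp (c*t) / fact j) \<longlongrightarrow> (\<Sum>j<N. 0)) at_top"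
    by (intro tendsto_sum) auto
  moreover have "(\<lambda>t. \<Sum>j<N. (c*t)^j / exp (c*t) / fact j) = (\<lambda>t. exp (-c*t) * (\<Sum>j<N. (c*t)^j / fact j))"
    by (rule ext) (simp add: sum_distrib_left exp_minus field_simps)
  ultimately show ?thesis
    by simp
qed

text \<open>The Poisson weights of any finite initial segment vanish as \<open>t \<rightarrow> \<infinity>\<close>, so only the tail,
  where the sequence is close to its limit, matters.\<close>

lemma poisson_average_tendsto:
  fixes a :: "nat \<Rightarrow> real"
  assumes c: "c > 0" and mono: "incseq a" and lim: "a \<longlonglongrightarrow> L"
  shows "((\<lambda>t. exp (-c*t) * (\<Sum>j. (c*t)^j / fact j * a j)) \<longlongrightarrow> L) at_top"
proof -
  define u where "u t j = (c*t)^j / fact j" for t :: real and j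
  have u_sums: "u t sums exp (c*t)" for t
    unfolding u_def by (rule exp_real_sums)
  have u_nonneg: "t \<ge> 0 \<Longrightarrow> 0 \<le> u t j" for t j
    unfolding u_def using c by simp
  have a_le: "a j \<le> L" for j
    by (rule incseq_le[OF mono lim])
  have a_ge: "a 0 \<le> a j" for j
    using mono by (simp add: incseqD)
  have summable_u: "summable (\<lambda>j. u t j * (a j - C))" for t C
  proof (rule summable_comparison_test'[of "\<lambda>j. (\<bar>a 0\<bar> + \<bar>L\<bar> + \<bar>C\<bar>) * norm (u t j)"])
    show "summable (\<lambda>j. (\<bar>a 0\<bar> + \<bar>L\<bar> + \<bar>C\<bar>) * norm (u t j))"
      by (rule summable_mult, rule summable_norm_exp_dominated[where r="\<bar>c*t\<bar>"])
        (simp add: u_def abs_mult power_abs)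
    fix j
    have "\<bar>a j - C\<bar> \<le> \<bar>a 0\<bar> + \<bar>L\<bar> + \<bar>C\<bar>"
      using a_le[of j] a_ge[of j] by linarith
    then show "norm (u t j * (a j - C)) \<le> (\<bar>a 0\<bar> + \<bar>L\<bar> + \<bar>C\<bar>) * norm (u t j)"
      by (simp add: abs_mult mult.commute mult_left_mono)
  qed
  have shift: "exp (-c*t) * (\<Sum>j. u t j * a j) = C + exp (-c*t) * (\<Sum>j. u t j * (a j - C))" for t C
  proof -
    have "(\<Sum>j. u t j * a j) = (\<Sum>j. u t j * (a j - C)) + (\<Sum>j. u t j * C)"
      using suminf_add[OF summable_u summable_mult2[OF sums_summable[OF u_sums[of t]], of C]]
      by (simp add: algebra_simps)
    also have "(\<Sum>j. u t j * C) = exp (c*t) * C"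
      using sums_unique[OF u_sums[of t]] suminf_mult2[OF sums_summable[OF u_sums[of t]], of C] by simp
    finally show ?thesis
      by (simp add: algebra_simps mult.assoc[symmetric] flip: exp_add)
  qed
  have upper: "exp (-c*t) * (\<Sum>j. u t j * a j) \<le> L" if t: "t \<ge> 0" for t
  proof -
    have "(\<Sum>j. u t j * (a j - L)) \<le> (\<Sum>j::nat. 0)"
      using summable_u a_le u_nonneg[OF t] by (intro suminf_le) (auto simp: mult_nonneg_nonpos)
    then show ?thesis
      using shift[of t L] by (simp add: mult_nonneg_nonpos)
  qed
  have lower: "a N + (a 0 - a N) * (exp (-c*t) * (\<Sum>j<N. u t j)) \<le> exp (-c*t) * (\<Sum>j. u t j * a j)"
    if t: "t \<ge> 0" for t N
  proof -
    have "(a 0 - a N) * (\<Sum>j<N. u t j) \<le> (\<Sum>j<N. u t j * (a j - a N))"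
      unfolding sum_distrib_left using a_ge u_nonneg[OF t]
      by (intro sum_mono) (simp add: mult.commute mult_left_mono)
    also have "\<dots> \<le> (\<Sum>j. u t j * (a j - a N))"
      using summable_u u_nonneg[OF t] mono by (intro sum_le_suminf) (auto simp: incseq_def)
    finally have "(a 0 - a N) * (exp (-c*t) * (\<Sum>j<N. u t j)) \<le> exp (-c*t) * (\<Sum>j. u t j * (a j - a N))"
      by (simp add: mult.left_commute)
    then show ?thesis
      using shift[of t "a N"] by linarith
  qed
  have "((\<lambda>t. exp (-c*t) * (\<Sum>j. u t j * a j)) \<longlongrightarrow> L) at_top"
  proof (rule order_tendstoI)
    fix y assume "y < L"
    then obtain N where N: "y < a N"
      using order_tendstoD(1)[OF lim] by (auto simp: eventually_sequentially)
    have "((\<lambda>t. a N + (a 0 - a N) * (exp (-c*t) * (\<Sum>j<N. u t j))) \<longlongrightarrow> a N + (a 0 - a N) * 0) at_top"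
      unfolding u_def by (intro tendsto_intros poisson_mass_below_tendsto_0 c)
    then have "eventually (\<lambda>t. y < a N + (a 0 - a N) * (exp (-c*t) * (\<Sum>j<N. u t j))) at_top"
      using N by (intro order_tendstoD(1)) auto
    then show "eventually (\<lambda>t. y < exp (-c*t) * (\<Sum>j. u t j * a j)) at_top"
      using eventually_ge_at_top[of 0] by eventually_elim (use lower in \<open>blast intro: less_le_trans\<close>)
  next
    fix y assume "L < y"
    show "eventually (\<lambda>t. exp (-c*t) * (\<Sum>j. u t j * a j) < y) at_top"
      using eventually_ge_at_top[of 0]
      by eventually_elim (use upper \<open>L < y\<close> in \<open>blast intro: le_less_trans\<close>)
  qed
  then show ?thesis
    unfolding u_def .
qed

lemma poisson_series_limit_le:
  fixes e :: "nat \<Rightarrow> real"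
  assumes c: "c > 0" and growth: "\<And>j. c * e j \<le> e (Suc j)" and bound: "\<And>j. e j \<le> c^j * V"
  shows "\<exists>L. ((\<lambda>t. exp (-c*t) * (\<Sum>j. t^j / fact j * e j)) \<longlongrightarrow> L) at_top \<and> L \<le> V"
proof -
  define a where "a j = e j / c^j" for j
  have e_eq: "e j = c^j * a j" for j
    using c unfolding a_def by simp
  have mono: "incseq a"
  proof (rule incseq_SucI)
    fix j
    have "c^(Suc j) * a j \<le> c^(Suc j) * a (Suc j)"
      using growth[of j] unfolding e_eq by (simp add: mult.assoc)
    then show "a j \<le> a (Suc j)"
      using c by (simp del: power_Suc)
  qed
  have a_le: "a j \<le> V" for j
    using bound[of j] c unfolding e_eq by simp
  obtain L where lim: "a \<longlonglongrightarrow> L"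
    using incseq_convergent[OF mono] a_le by blast
  have "(\<lambda>t. exp (-c*t) * (\<Sum>j. t^j / fact j * e j)) = (\<lambda>t. exp (-c*t) * (\<Sum>j. (c*t)^j / fact j * a j))"
    by (simp add: e_eq power_mult_distrib mult_ac)
  moreover have "L \<le> V"
    using LIMSEQ_le_const2[OF lim] a_le by blast
  ultimately show ?thesis
    using poisson_average_tendsto[OF c mono lim] by auto
qed

section \<open>Nonnegative kernels with a closed class\<close>

lemma gpow_Suc_sum:
  assumes "finite S"
  shows "(\<Sum>y\<in>S. gpow S K (Suc j) x y * f y) = (\<Sum>z\<in>S. gpow S K j x z * (\<Sum>y\<in>S. K z y * f y))"
proof -
  have "(\<Sum>y\<in>S. gpow S K (Suc j) x y * f y) = (\<Sum>y\<in>S. \<Sum>z\<in>S. gpow S K j x z * K z y * f y)"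
    by (simp add: sum_distrib_right)
  also have "\<dots> = (\<Sum>z\<in>S. \<Sum>y\<in>S. gpow S K j x z * K z y * f y)"
    by (rule sum.swap)
  finally show ?thesis
    by (simp add: sum_distrib_left mult.assoc)
qed

text \<open>Mass started in \<open>x\<close> never leaves \<open>R\<close>, so comparisons of test functions need only hold on \<open>R\<close>.\<close>

locale closed_class =
  fixes S R :: "'a set" and K :: "'a \<Rightarrow> 'a \<Rightarrow> real" and x :: 'a
  assumes finite_S: "finite S"
    and R_subset: "R \<subseteq> S"
    and closed: "\<And>z w. z \<in> R \<Longrightarrow> w \<in> S - R \<Longrightarrow> K z w = 0"
    and start: "x \<in> R"
    and K_nonneg: "\<And>z w. z \<in> S \<Longrightarrow> w \<in> S \<Longrightarrow> K z w \<ge> 0"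
begin

definition mean :: "nat \<Rightarrow> ('a \<Rightarrow> real) \<Rightarrow> real" where
  "mean j f = (\<Sum>y\<in>S. gpow S K j x y * f y)"

lemma gpow_outside_eq_0: "y \<in> S - R \<Longrightarrow> gpow S K j x y = 0"
proof (induction j arbitrary: y)
  case 0
  then show ?case using start by auto
next
  case (Suc j)
  have "gpow S K j x z * K z y = 0" if "z \<in> S" for z
    using Suc closed that by (cases "z \<in> R") auto
  then show ?case by (auto intro!: sum.neutral)
qed

lemma gpow_weighted_sum_mono:
  assumes "\<And>z. z \<in> R \<Longrightarrow> F z \<le> G z"
  shows "(\<Sum>z\<in>S. gpow S K j x z * F z) \<le> (\<Sum>z\<in>S. gpow S K j x z * G z)"
proof (rule sum_mono)
  fix z assume z: "z \<in> S"
  show "gpow S K j x z * F z \<le> gpow S K j x z * G z"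
  proof (cases "z \<in> R")
    case True
    then show ?thesis
      using assms gpow_nonneg[of S K z] K_nonneg z by (intro mult_left_mono) auto
  next
    case False
    then show ?thesis using gpow_outside_eq_0[of z j] z by simp
  qed
qed

lemma mean_0: "mean 0 f = f x"
proof -
  have "mean 0 f = (\<Sum>y\<in>S. if x = y then f y else 0)"
    unfolding mean_def by (rule sum.cong) auto
  then show ?thesis
    using finite_S R_subset start by auto
qed

lemma mean_mono: "(\<And>z. z \<in> R \<Longrightarrow> f z \<le> g z) \<Longrightarrow> mean j f \<le> mean j g"
  unfolding mean_def by (rule gpow_weighted_sum_mono)

lemma mean_Suc_ge:
  assumes "\<And>z. z \<in> R \<Longrightarrow> c * f z \<le> (\<Sum>y\<in>S. K z y * f y)"
  shows "c * mean j f \<le> mean (Suc j) f"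
proof -
  have "c * mean j f = (\<Sum>z\<in>S. gpow S K j x z * (c * f z))"
    unfolding mean_def sum_distrib_left by (simp add: mult_ac)
  also have "\<dots> \<le> (\<Sum>z\<in>S. gpow S K j x z * (\<Sum>y\<in>S. K z y * f y))"
    by (rule gpow_weighted_sum_mono) (rule assms)
  also have "\<dots> = mean (Suc j) f"
    unfolding mean_def by (rule gpow_Suc_sum[OF finite_S, symmetric])
  finally show ?thesis .
qed

lemma mean_le_pow:
  assumes "\<And>z. z \<in> R \<Longrightarrow> (\<Sum>y\<in>S. K z y * f y) \<le> c * f z" and "0 \<le> c"
  shows "mean j f \<le> c^j * f x"
proof (induction j)
  case 0
  then show ?case by (simp add: mean_0)
next
  case (Suc j)
  have "mean (Suc j) f = (\<Sum>z\<in>S. gpow S K j x z * (\<Sum>y\<in>S. K z y * f y))"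
    unfolding mean_def by (rule gpow_Suc_sum[OF finite_S])
  also have "\<dots> \<le> (\<Sum>z\<in>S. gpow S K j x z * (c * f z))"
    by (rule gpow_weighted_sum_mono) (rule assms(1))
  also have "\<dots> = c * mean j f"
    unfolding mean_def sum_distrib_left by (simp add: mult_ac)
  also have "\<dots> \<le> c * (c^j * f x)"
    using Suc assms(2) by (rule mult_left_mono)
  finally show ?case by simp
qed

end

section \<open>The generator of the SIR chain\<close>

definition local_states :: "nat \<Rightarrow> lstate set" where
  "local_states p = insert Sus (insert Rem (Inf ` {..<p}))"

lemma finite_local_states: "finite (local_states p)"
  unfolding local_states_def by simp

lemma sir_state_local: "x \<in> sir_states n p \<Longrightarrow> i < n \<Longrightarrow> x i \<in> local_states p"
  unfolding sir_states_def local_states_def by (cases "x i") auto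

lemma sir_states_upd:
  "x \<in> sir_states n p \<Longrightarrow> i < n \<Longrightarrow> s \<in> local_states p \<Longrightarrow> x(i := s) \<in> sir_states n p"
  unfolding sir_states_def local_states_def by auto

lemma finite_sir_states: "finite (sir_states n p)"
proof -
  let ?ext = "\<lambda>f i. if i < n then f i else Rem"
  have "sir_states n p \<subseteq> ?ext ` (PiE {..<n} (\<lambda>_. local_states p))"
  proof
    fix x assume x: "x \<in> sir_states n p"
    have "x = ?ext (restrict x {..<n})"
      using x unfolding sir_states_def by (auto simp: fun_eq_iff)
    moreover have "restrict x {..<n} \<in> PiE {..<n} (\<lambda>_. local_states p)"
      using sir_state_local[OF x] by auto
    ultimately show "x \<in> ?ext ` (PiE {..<n} (\<lambda>_. local_states p))"
      by blast
  qed
  then show ?thesis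
    by (rule finite_subset) (intro finite_imageI finite_PiE finite_local_states finite_lessThan)
qed

definition sir_moves :: "nat \<Rightarrow> nat \<Rightarrow> (nat \<Rightarrow> lstate) \<Rightarrow> (nat \<times> lstate) set" where
  "sir_moves n p x = Sigma {..<n} (\<lambda>i. local_states p - {x i})"

lemma sir_rate_upd:
  assumes "i < n" "s \<noteq> x i"
  shows "sir_rate n p A beta delta Pm x (x(i := s)) = node_rate n p A beta delta Pm x i s"
proof -
  have "(THE i'. i' < n \<and> x i' \<noteq> (x(i := s)) i') = i"
    using assms by (intro the_equality) (auto split: if_splits)
  moreover have "x \<noteq> x(i := s) \<and> (\<exists>i'<n. x(i := s) = x(i' := (x(i := s)) i'))"
    using assms by (auto simp: fun_eq_iff)
  ultimately show ?thesis
    unfolding sir_rate_def by simp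
qed

lemma sir_rate_eq_0:
  assumes "y \<in> sir_states n p" "y \<noteq> x" "y \<notin> (\<lambda>(i,s). x(i := s)) ` sir_moves n p x"
  shows "sir_rate n p A beta delta Pm x y = 0"
proof -
  have "\<not> (\<exists>i<n. y = x(i := y i))"
  proof
    assume "\<exists>i<n. y = x(i := y i)"
    then obtain i where i: "i < n" "y = x(i := y i)" by blast
    then have "y i \<noteq> x i"
      using assms(2) by (metis fun_upd_triv)
    then have "(i, y i) \<in> sir_moves n p x"
      using sir_state_local[OF assms(1) i(1)] i unfolding sir_moves_def by auto
    then show False
      using assms(3) i by force
  qed
  then show ?thesis
    unfolding sir_rate_def by auto
qed

lemma inj_on_sir_moves: "inj_on (\<lambda>(i,s). x(i := s)) (sir_moves n p x)"
proof (rule inj_onI, clarify)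
  fix i s i' s' assume moves: "(i, s) \<in> sir_moves n p x" "(i', s') \<in> sir_moves n p x"
    and eq: "x(i := s) = x(i' := s')"
  have "i = i'"
  proof (rule ccontr)
    assume "i \<noteq> i'"
    then have "(x(i := s)) i = x i"
      using eq by (metis fun_upd_other fun_upd_same)
    then show False
      using moves(1) unfolding sir_moves_def by auto
  qed
  with eq show "i = i' \<and> s = s'"
    by (metis fun_upd_same)
qed

lemma sir_gen_sum_diff:
  assumes x: "x \<in> sir_states n p"
  shows "(\<Sum>y\<in>sir_states n p. sir_gen n p A beta delta Pm x y * f y)
       = (\<Sum>y\<in>sir_states n p - {x}. sir_rate n p A beta delta Pm x y * (f y - f x))"
proof -
  let ?S = "sir_states n p" and ?r = "sir_rate n p A beta delta Pm x"
  have "(\<Sum>y\<in>?S. sir_gen n p A beta delta Pm x y * f y)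
      = sir_gen n p A beta delta Pm x x * f x + (\<Sum>y\<in>?S - {x}. sir_gen n p A beta delta Pm x y * f y)"
    using finite_sir_states x by (simp add: sum.remove)
  also have "(\<Sum>y\<in>?S - {x}. sir_gen n p A beta delta Pm x y * f y) = (\<Sum>y\<in>?S - {x}. ?r y * f y)"
    unfolding sir_gen_def by (rule sum.cong) auto
  also have "sir_gen n p A beta delta Pm x x * f x = - (\<Sum>y\<in>?S - {x}. ?r y * f x)"
    unfolding sir_gen_def by (simp add: sum_distrib_right)
  finally show ?thesis
    by (simp add: sum_subtractf right_diff_distrib)
qed

text \<open>Only single-node moves carry rate, so the generator acts through the node rates.\<close>

lemma sir_gen_sum:
  assumes x: "x \<in> sir_states n p"
  shows "(\<Sum>y\<in>sir_states n p. sir_gen n p A beta delta Pm x y * f y)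
       = (\<Sum>i<n. \<Sum>s\<in>local_states p - {x i}. node_rate n p A beta delta Pm x i s * (f (x(i := s)) - f x))"
proof -
  let ?S = "sir_states n p" and ?r = "sir_rate n p A beta delta Pm x" and ?upd = "\<lambda>(i,s). x(i := s)"
  have moves_sub: "?upd ` sir_moves n p x \<subseteq> ?S - {x}"
    using x by (auto simp: sir_moves_def fun_eq_iff intro: sir_states_upd split: if_splits)
  have "(\<Sum>y\<in>?S - {x}. ?r y * (f y - f x)) = (\<Sum>y\<in>?upd ` sir_moves n p x. ?r y * (f y - f x))"
    by (rule sum.mono_neutral_right) (use finite_sir_states moves_sub sir_rate_eq_0 in auto)
  also have "\<dots> = (\<Sum>(i,s)\<in>sir_moves n p x. ?r (x(i := s)) * (f (x(i := s)) - f x))"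
    by (subst sum.reindex[OF inj_on_sir_moves]) (simp add: case_prod_beta)
  also have "\<dots> = (\<Sum>(i,s)\<in>sir_moves n p x. node_rate n p A beta delta Pm x i s * (f (x(i := s)) - f x))"
  proof (rule sum.cong)
    fix m assume "m \<in> sir_moves n p x"
    then show "(case m of (i,s) \<Rightarrow> ?r (x(i := s)) * (f (x(i := s)) - f x))
        = (case m of (i,s) \<Rightarrow> node_rate n p A beta delta Pm x i s * (f (x(i := s)) - f x))"
      by (cases m) (simp add: sir_moves_def sir_rate_upd)
  qed simp
  also have "\<dots> = (\<Sum>i<n. \<Sum>s\<in>local_states p - {x i}. node_rate n p A beta delta Pm x i s * (f (x(i := s)) - f x))"
    unfolding sir_moves_def by (subst sum.Sigma) (auto simp: finite_local_states)
  finally show ?thesis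
    unfolding sir_gen_sum_diff[OF x] .
qed

lemma sum_upd_diff:
  fixes \<phi> :: "nat \<Rightarrow> lstate \<Rightarrow> real"
  assumes "i < n"
  shows "(\<Sum>k<n. \<phi> k ((x(i := s)) k)) - (\<Sum>k<n. \<phi> k (x k)) = \<phi> i s - \<phi> i (x i)"
proof -
  have "(\<Sum>k<n. \<phi> k ((x(i := s)) k)) = (\<Sum>k<n. \<phi> k (x k) + (if k = i then \<phi> i s - \<phi> i (x i) else 0))"
    by (rule sum.cong) auto
  then show ?thesis
    using assms by (simp add: sum.distrib)
qed

lemma sir_gen_sum_additive:
  fixes \<phi> :: "nat \<Rightarrow> lstate \<Rightarrow> real"
  assumes x: "x \<in> sir_states n p"
  shows "(\<Sum>y\<in>sir_states n p. sir_gen n p A beta delta Pm x y * (\<Sum>k<n. \<phi> k (y k)))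
       = (\<Sum>i<n. \<Sum>s\<in>local_states p - {x i}. node_rate n p A beta delta Pm x i s * (\<phi> i s - \<phi> i (x i)))"
  unfolding sir_gen_sum[OF x] by (intro sum.cong refl) (auto simp del: fun_upd_apply simp add: sum_upd_diff)

section \<open>A drift bound for the SIR chain\<close>

lemma index_less: "i < n \<Longrightarrow> l < p \<Longrightarrow> i*p + l < n*(p::nat)"
proof -
  assume i: "i < n" and l: "l < p"
  have "i*p + l < Suc i * p"
    using l by simp
  also have "\<dots> \<le> n*p"
    using i by (intro mult_right_mono) auto
  finally show ?thesis .
qed

locale sir_drift =
  fixes n p :: nat and A :: mat and beta delta :: "nat \<Rightarrow> real" and Pm :: "nat \<Rightarrow> mat"
    and I0 :: "nat set" and v :: "nat \<Rightarrow> real"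
  assumes p_pos: "0 < p"
    and A_nonneg: "\<And>i j. i < n \<Longrightarrow> j < n \<Longrightarrow> A i j \<ge> 0"
    and beta_nonneg: "\<And>i. i < n \<Longrightarrow> beta i \<ge> 0"
    and delta_nonneg: "\<And>i. i < n \<Longrightarrow> delta i \<ge> 0"
    and offdiag_nonneg: "\<And>i l m. i < n \<Longrightarrow> l < p \<Longrightarrow> m < p \<Longrightarrow> l \<noteq> m \<Longrightarrow> Pm i l m \<ge> 0"
    and exit_nonneg: "\<And>i l. i < n \<Longrightarrow> l < p \<Longrightarrow> exitvec p (Pm i) l \<ge> 0"
    and I0_subset: "I0 \<subseteq> {..<n}"
    and v_nonneg: "\<And>c. c < n * p \<Longrightarrow> v c \<ge> 0"
    and drift: "\<And>j l. j < n \<Longrightarrow> l < p \<Longrightarrow>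
        (\<Sum>m<p. v (j*p+m) * offdiag (Pm j) l m)
        + (\<Sum>i<n. v (i*p) * ((if i \<in> I0 then 0 else 1) * beta i * A i j))
        + exitvec p (Pm j) l + delta j \<le> v (j*p+l) * (- Pm j l l + delta j)"
begin

abbreviation "S \<equiv> sir_states n p"
abbreviation "Q \<equiv> sir_gen n p A beta delta Pm"
abbreviation "rate \<equiv> node_rate n p A beta delta Pm"

lemma is_inf_nonneg: "0 \<le> is_inf s"
  unfolding is_inf_def by (cases s) auto

lemma node_rate_nonneg:
  assumes x: "x \<in> S" and i: "i < n" and s: "s \<in> local_states p"
  shows "rate x i s \<ge> 0"
proof (cases "x i")
  case Sus
  have "0 \<le> (\<Sum>j<n. A i j * is_inf (x j))"
    using A_nonneg i by (intro sum_nonneg mult_nonneg_nonneg is_inf_nonneg) auto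
  then show ?thesis
    using Sus beta_nonneg i unfolding node_rate_def by (cases s) auto
next
  case (Inf l)
  then have "l < p"
    using x i unfolding sir_states_def by auto
  then show ?thesis
    using Inf s offdiag_nonneg exit_nonneg delta_nonneg i
    unfolding node_rate_def local_states_def by (cases s) auto
next
  case Rem
  then show ?thesis
    unfolding node_rate_def by auto
qed

lemma sir_rate_nonneg:
  assumes x: "x \<in> S" and y: "y \<in> S" "y \<noteq> x"
  shows "sir_rate n p A beta delta Pm x y \<ge> 0"
proof (cases "y \<in> (\<lambda>(i,s). x(i := s)) ` sir_moves n p x")
  case True
  then obtain i s where "i < n" "s \<in> local_states p" "s \<noteq> x i" "y = x(i := s)"
    unfolding sir_moves_def by auto
  then show ?thesis
    using sir_rate_upd node_rate_nonneg[OF x] by simp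
next
  case False
  then show ?thesis
    using sir_rate_eq_0[OF y] by simp
qed

text \<open>A uniformization constant: it exceeds every total exit rate, so that \<open>Q + c I\<close> is nonnegative.\<close>

definition unif_const :: real where
  "unif_const = 1 + (\<Sum>x\<in>S. \<Sum>z\<in>S - {x}. sir_rate n p A beta delta Pm x z)"

abbreviation "K \<equiv> diag_shift Q unif_const"

lemma unif_const_pos: "unif_const > 0"
proof -
  have "0 \<le> (\<Sum>x\<in>S. \<Sum>z\<in>S - {x}. sir_rate n p A beta delta Pm x z)"
    by (intro sum_nonneg) (auto intro: sir_rate_nonneg)
  then show ?thesis
    unfolding unif_const_def by simp
qed

lemma K_nonneg:
  assumes z: "z \<in> S" and w: "w \<in> S"
  shows "K z w \<ge> 0"
proof (cases "z = w")
  case True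
  have "(\<Sum>y\<in>S - {z}. sir_rate n p A beta delta Pm z y) \<le> unif_const - 1"
    unfolding unif_const_def using finite_sir_states z sir_rate_nonneg
    by (simp, intro member_le_sum[where f="\<lambda>x. \<Sum>y\<in>S - {x}. sir_rate n p A beta delta Pm x y"] sum_nonneg)
      auto
  then show ?thesis
    using True unfolding diag_shift_def sir_gen_def by simp
next
  case False
  then show ?thesis
    using sir_rate_nonneg[OF z w] unfolding diag_shift_def sir_gen_def by simp
qed

text \<open>Initially infected nodes never become susceptible again.\<close>

definition reachable :: "(nat \<Rightarrow> lstate) set" where
  "reachable = {x \<in> S. \<forall>i\<in>I0. x i \<noteq> Sus}"

lemma K_reachable_closed:
  assumes z: "z \<in> reachable" and w: "w \<in> S - reachable"
  shows "K z w = 0"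
proof -
  have zw: "z \<noteq> w" and zS: "z \<in> S"
    using z w unfolding reachable_def by auto
  have "sir_rate n p A beta delta Pm z w = 0"
  proof (cases "w \<in> (\<lambda>(i,s). z(i := s)) ` sir_moves n p z")
    case True
    then obtain i s where move: "i < n" "s \<noteq> z i" "w = z(i := s)"
      unfolding sir_moves_def by auto
    obtain i' where i': "i' \<in> I0" "w i' = Sus"
      using w unfolding reachable_def by auto
    then have "i' = i" "s = Sus"
      using z move(3) unfolding reachable_def by (auto split: if_splits)
    then have "rate z i s = 0"
      using move(2) unfolding node_rate_def by (cases "z i") auto
    then show ?thesis
      using sir_rate_upd move by simp
  next
    case False
    then show ?thesis
      using sir_rate_eq_0 w zw by auto
  qed
  then show ?thesis
    using zw unfolding diag_shift_def sir_gen_def by simp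
qed

lemma init_reachable: "sir_init n I0 \<in> reachable"
  using I0_subset p_pos unfolding reachable_def sir_states_def sir_init_def by auto

definition removed_ind :: "lstate \<Rightarrow> real" where
  "removed_ind s = (if s = Rem then 1 else 0)"

lemma card_removed_eq_sum: "real (card {i. i < n \<and> y i = Rem}) = (\<Sum>i<n. removed_ind (y i))"
proof -
  have "real (card {i. i < n \<and> y i = Rem}) = real (card {i\<in>{..<n}. y i = Rem})"
    by (simp add: lessThan_def conj_commute)
  also have "\<dots> = (\<Sum>i<n. removed_ind (y i))"
    unfolding removed_ind_def by (simp add: sum.If_cases Int_def)
  finally show ?thesis .
qed

lemma removed_subharmonic:
  assumes z: "z \<in> S"
  shows "unif_const * real (card {i. i < n \<and> z i = Rem}) \<le> (\<Sum>y\<in>S. K z y * real (card {i. i < n \<and> y i = Rem}))"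
proof -
  have "0 \<le> (\<Sum>i<n. \<Sum>s\<in>local_states p - {z i}. rate z i s * (removed_ind s - removed_ind (z i)))"
  proof (intro sum_nonneg)
    fix i s assume i: "i \<in> {..<n}" and s: "s \<in> local_states p - {z i}"
    show "0 \<le> rate z i s * (removed_ind s - removed_ind (z i))"
    proof (cases "z i = Rem")
      case True
      then show ?thesis unfolding node_rate_def by simp
    next
      case False
      then show ?thesis
        using node_rate_nonneg[OF z, of i s] i s by (simp add: removed_ind_def)
    qed
  qed
  also have "\<dots> = (\<Sum>y\<in>S. Q z y * (\<Sum>i<n. removed_ind (y i)))"
    by (rule sir_gen_sum_additive[OF z, where \<phi>="\<lambda>_. removed_ind", symmetric])
  finally show ?thesis
    unfolding diag_shift_row_sum[OF finite_sir_states z] card_removed_eq_sum by simp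
qed

end

context sir_drift
begin

definition lyap_local :: "nat \<Rightarrow> lstate \<Rightarrow> real" where
  "lyap_local i s = removed_ind s + (case s of Inf l \<Rightarrow> v (i*p+l) | _ \<Rightarrow> 0)"

definition lyapunov :: "(nat \<Rightarrow> lstate) \<Rightarrow> real" where
  "lyapunov y = (\<Sum>i<n. lyap_local i (y i))"

lemma removed_le_lyapunov:
  assumes z: "z \<in> S"
  shows "real (card {i. i < n \<and> z i = Rem}) \<le> lyapunov z"
  unfolding card_removed_eq_sum lyapunov_def
proof (rule sum_mono)
  fix i assume i: "i \<in> {..<n}"
  show "removed_ind (z i) \<le> lyap_local i (z i)"
  proof (cases "z i")
    case (Inf l)
    then have "l < p"
      using z i unfolding sir_states_def by auto
    then show ?thesis
      using Inf i v_nonneg index_less unfolding lyap_local_def by auto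
  qed (auto simp: lyap_local_def)
qed

lemma lyapunov_init: "lyapunov (sir_init n I0) = (\<Sum>i<n. if i \<in> I0 then v (i*p) else 0)"
  unfolding lyapunov_def lyap_local_def removed_ind_def sir_init_def by (rule sum.cong) auto

definition infection_gain :: "nat \<Rightarrow> real" where
  "infection_gain j = (\<Sum>i<n. v (i*p) * ((if i \<in> I0 then 0 else 1) * beta i * A i j))"

definition phase_drift :: "nat \<Rightarrow> nat \<Rightarrow> real" where
  "phase_drift i l = (\<Sum>m<p. offdiag (Pm i) l m * (v (i*p+m) - v (i*p+l)))
     + (exitvec p (Pm i) l + delta i) * (1 - v (i*p+l))"

lemma lyap_node_drift_Sus:
  assumes zi: "z i = Sus"
  shows "(\<Sum>s\<in>local_states p - {z i}. rate z i s * (lyap_local i s - lyap_local i (z i)))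
       = beta i * (\<Sum>j<n. A i j * is_inf (z j)) * v (i*p)"
proof -
  have states: "local_states p - {z i} = insert Rem (Inf ` {..<p})"
    using zi unfolding local_states_def by auto
  have "(\<Sum>s\<in>local_states p - {z i}. rate z i s * (lyap_local i s - lyap_local i (z i)))
      = rate z i Rem * (lyap_local i Rem - lyap_local i (z i))
        + (\<Sum>m<p. rate z i (Inf m) * (lyap_local i (Inf m) - lyap_local i (z i)))"
    unfolding states by (subst sum.insert) (auto simp: sum.reindex inj_on_def)
  also have "\<dots> = (\<Sum>m<p. (if m = 0 then beta i * (\<Sum>j<n. A i j * is_inf (z j)) else 0) * v (i*p+m))"
    using zi by (simp add: node_rate_def lyap_local_def removed_ind_def)
  also have "\<dots> = (\<Sum>m<p. if m = 0 then beta i * (\<Sum>j<n. A i j * is_inf (z j)) * v (i*p) else 0)"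
    by (rule sum.cong) auto
  finally show ?thesis
    using p_pos by simp
qed

lemma lyap_node_drift_Inf:
  assumes zi: "z i = Inf l" and l: "l < p"
  shows "(\<Sum>s\<in>local_states p - {z i}. rate z i s * (lyap_local i s - lyap_local i (z i))) = phase_drift i l"
proof -
  have states: "local_states p - {z i} = insert Sus (insert Rem (Inf ` ({..<p} - {l})))"
    using zi l unfolding local_states_def by auto
  have "(\<Sum>s\<in>local_states p - {z i}. rate z i s * (lyap_local i s - lyap_local i (z i)))
      = rate z i Sus * (lyap_local i Sus - lyap_local i (z i))
        + rate z i Rem * (lyap_local i Rem - lyap_local i (z i))
        + (\<Sum>m\<in>{..<p} - {l}. rate z i (Inf m) * (lyap_local i (Inf m) - lyap_local i (z i)))"
    unfolding states by (subst sum.insert, force, force)+ (simp add: sum.reindex inj_on_def)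
  also have "(\<Sum>m\<in>{..<p} - {l}. rate z i (Inf m) * (lyap_local i (Inf m) - lyap_local i (z i)))
      = (\<Sum>m\<in>{..<p} - {l}. offdiag (Pm i) l m * (v (i*p+m) - v (i*p+l)))"
    using zi by (auto simp: node_rate_def lyap_local_def removed_ind_def offdiag_def intro!: sum.cong)
  also have "\<dots> = (\<Sum>m<p. offdiag (Pm i) l m * (v (i*p+m) - v (i*p+l)))"
    by (rule sum.mono_neutral_left) (auto simp: offdiag_def)
  finally show ?thesis
    using zi unfolding phase_drift_def by (simp add: node_rate_def lyap_local_def removed_ind_def)
qed

lemma lyap_node_drift:
  assumes z: "z \<in> S" and i: "i < n"
  shows "(\<Sum>s\<in>local_states p - {z i}. rate z i s * (lyap_local i s - lyap_local i (z i)))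
     = (if z i = Sus then beta i * (\<Sum>j<n. A i j * is_inf (z j)) * v (i*p) else 0)
       + (case z i of Inf l \<Rightarrow> phase_drift i l | _ \<Rightarrow> 0)"
proof (cases "z i")
  case Sus
  then show ?thesis
    using lyap_node_drift_Sus[of z i, OF Sus] by simp
next
  case (Inf l)
  then have "l < p"
    using z i unfolding sir_states_def by auto
  then show ?thesis
    using lyap_node_drift_Inf[of z i, OF Inf] Inf by simp
next
  case Rem
  then show ?thesis
    unfolding node_rate_def by simp
qed

lemma phase_drift_le:
  assumes j: "j < n" and l: "l < p"
  shows "infection_gain j + phase_drift j l \<le> 0"
proof -
  have "(\<Sum>m<p. Pm j l m) = (\<Sum>m<p. (if m = l then Pm j l m else 0) + offdiag (Pm j) l m)"
    by (rule sum.cong) (auto simp: offdiag_def)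
  then have offdiag_sum: "(\<Sum>m<p. offdiag (Pm j) l m) = - exitvec p (Pm j) l - Pm j l l"
    using l unfolding exitvec_def by (simp add: sum.distrib)
  have "(\<Sum>m<p. offdiag (Pm j) l m * (v (j*p+m) - v (j*p+l)))
      = (\<Sum>m<p. v (j*p+m) * offdiag (Pm j) l m) - v (j*p+l) * (\<Sum>m<p. offdiag (Pm j) l m)"
    by (simp add: algebra_simps sum_subtractf sum_distrib_left)
  then have "phase_drift j l = (\<Sum>m<p. v (j*p+m) * offdiag (Pm j) l m) + exitvec p (Pm j) l + delta j
      - v (j*p+l) * (- Pm j l l + delta j)"
    unfolding phase_drift_def offdiag_sum by (simp add: algebra_simps)
  then show ?thesis
    using drift[OF j l] unfolding infection_gain_def by linarith
qed

lemma susceptible_drift_le: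
  assumes z: "z \<in> reachable"
  shows "(\<Sum>i<n. if z i = Sus then beta i * (\<Sum>j<n. A i j * is_inf (z j)) * v (i*p) else 0)
       \<le> (\<Sum>j<n. is_inf (z j) * infection_gain j)"
proof -
  have "(\<Sum>i<n. if z i = Sus then beta i * (\<Sum>j<n. A i j * is_inf (z j)) * v (i*p) else 0)
      \<le> (\<Sum>i<n. (if i \<in> I0 then 0 else 1) * beta i * (\<Sum>j<n. A i j * is_inf (z j)) * v (i*p))"
  proof (rule sum_mono)
    fix i assume i: "i \<in> {..<n}"
    have "0 \<le> beta i * (\<Sum>j<n. A i j * is_inf (z j)) * v (i*p)"
      using i beta_nonneg A_nonneg v_nonneg[OF index_less[of i n 0]] p_pos
      by (auto intro!: mult_nonneg_nonneg sum_nonneg is_inf_nonneg)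
    moreover have "z i = Sus \<Longrightarrow> i \<notin> I0"
      using z unfolding reachable_def by auto
    ultimately show "(if z i = Sus then beta i * (\<Sum>j<n. A i j * is_inf (z j)) * v (i*p) else 0)
        \<le> (if i \<in> I0 then 0 else 1) * beta i * (\<Sum>j<n. A i j * is_inf (z j)) * v (i*p)"
      by auto
  qed
  also have "\<dots> = (\<Sum>j<n. is_inf (z j) * infection_gain j)"
    unfolding infection_gain_def sum_distrib_left sum_distrib_right
    by (subst sum.swap) (simp add: mult_ac)
  finally show ?thesis .
qed

lemma lyapunov_superharmonic:
  assumes z: "z \<in> reachable"
  shows "(\<Sum>y\<in>S. K z y * lyapunov y) \<le> unif_const * lyapunov z"
proof -
  have zS: "z \<in> S"
    using z unfolding reachable_def by auto
  let ?inf = "\<lambda>j. case z j of Inf l \<Rightarrow> phase_drift j l | _ \<Rightarrow> 0"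
  have "(\<Sum>y\<in>S. Q z y * lyapunov y)
      = (\<Sum>i<n. if z i = Sus then beta i * (\<Sum>j<n. A i j * is_inf (z j)) * v (i*p) else 0) + (\<Sum>j<n. ?inf j)"
    unfolding lyapunov_def sir_gen_sum_additive[OF zS] sum.distrib[symmetric]
    by (rule sum.cong) (auto simp: lyap_node_drift[OF zS])
  also have "\<dots> \<le> (\<Sum>j<n. is_inf (z j) * infection_gain j + ?inf j)"
    using susceptible_drift_le[OF z] by (simp add: sum.distrib)
  also have "\<dots> \<le> 0"
  proof (rule sum_nonpos)
    fix j assume j: "j \<in> {..<n}"
    show "is_inf (z j) * infection_gain j + ?inf j \<le> 0"
    proof (cases "z j")
      case (Inf l)
      then have "l < p"
        using zS j unfolding sir_states_def by auto
      then show ?thesis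
        using phase_drift_le[of j l] j Inf by (simp add: is_inf_def)
    qed (auto simp: is_inf_def)
  qed
  finally show ?thesis
    unfolding diag_shift_row_sum[OF finite_sir_states zS] by simp
qed

lemma expected_removed_limit_le:
  "\<exists>L. ((\<lambda>t. sir_ERem n p A beta delta Pm I0 t) \<longlongrightarrow> L) at_top
      \<and> L \<le> (\<Sum>i<n. if i \<in> I0 then v (i*p) else 0)"
proof -
  let ?x0 = "sir_init n I0" and ?removed = "\<lambda>y. real (card {i. i < n \<and> y i = Rem})"
  interpret closed_class S reachable K ?x0
    by unfold_locales
      (use finite_sir_states K_reachable_closed init_reachable K_nonneg in \<open>auto simp: reachable_def\<close>)
  have "sir_ERem n p A beta delta Pm I0 = (\<lambda>t. exp (-unif_const*t) * (\<Sum>j. t^j / fact j * mean j ?removed))"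
    unfolding sir_ERem_def mean_def by (rule ext) (rule ctmc_expectation_diag_shift[OF finite_sir_states])
  moreover have "\<exists>L. ((\<lambda>t. exp (-unif_const*t) * (\<Sum>j. t^j / fact j * mean j ?removed)) \<longlongrightarrow> L) at_top
      \<and> L \<le> lyapunov ?x0"
  proof (rule poisson_series_limit_le[OF unif_const_pos])
    show "unif_const * mean j ?removed \<le> mean (Suc j) ?removed" for j
      by (rule mean_Suc_ge) (use removed_subharmonic reachable_def in auto)
    have "mean j ?removed \<le> mean j lyapunov" for j
      by (rule mean_mono) (use removed_le_lyapunov reachable_def in auto)
    also have "mean j lyapunov \<le> unif_const^j * lyapunov ?x0" for j
      using lyapunov_superharmonic unif_const_pos by (intro mean_le_pow) auto
    finally show "mean j ?removed \<le> unif_const^j * lyapunov ?x0" for j .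
  qed
  ultimately show ?thesis
    unfolding lyapunov_init by simp
qed

end

section \<open>Stacked vectors and matrices\<close>

lemma sum_lessThan_mult:
  fixes f :: "nat \<Rightarrow> 'a :: comm_monoid_add"
  shows "(\<Sum>r<n*p. f r) = (\<Sum>i<n. \<Sum>m<p. f (i*p+m))"
proof -
  have "(\<Sum>r<n*p. f r) = (\<Sum>(i,m)\<in>{..<n} \<times> {..<p}. f (i*p+m))"
  proof (rule sum.reindex_bij_witness[where i="\<lambda>(i,m). i*p+m" and j="\<lambda>r. (r div p, r mod p)"])
    fix r assume r: "r \<in> {..<n*p}"
    then have "0 < p"
      by (cases p) auto
    with r show "(r div p, r mod p) \<in> {..<n} \<times> {..<p}"
      by (auto simp: less_mult_imp_div_less)
  qed (auto simp: index_less)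
  also have "\<dots> = (\<Sum>i<n. \<Sum>m<p. f (i*p+m))"
    by (rule sum.cartesian_product[symmetric])
  finally show ?thesis .
qed

lemma vmul_madd: "vmul k v (madd X Y) c = vmul k v X c + vmul k v Y c"
  unfolding vmul_def madd_def by (simp add: distrib_left sum.distrib)

lemma vmul_dsum:
  assumes "j < n" "l < p"
  shows "vmul (n*p) v (dsum p p F) (j*p+l) = (\<Sum>m<p. v (j*p+m) * F j m l)"
proof -
  have "vmul (n*p) v (dsum p p F) (j*p+l) = (\<Sum>i<n. \<Sum>m<p. v (i*p+m) * dsum p p F (i*p+m) (j*p+l))"
    unfolding vmul_def by (rule sum_lessThan_mult)
  also have "\<dots> = (\<Sum>i<n. if i = j then (\<Sum>m<p. v (j*p+m) * F j m l) else 0)"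
    using assms by (intro sum.cong refl) (auto simp: dsum_def intro!: sum.cong)
  finally show ?thesis
    using assms by simp
qed

lemma vmul_dsum_diag:
  assumes "j < n" "l < p"
  shows "vmul (n*p) v (dsum p p (\<lambda>i. dsum 1 1 (\<lambda>l _ _. d i l))) (j*p+l) = v (j*p+l) * d j l"
  unfolding vmul_dsum[OF assms] using assms(2) by (simp add: dsum_def if_distrib cong: if_cong)

lemma vmul_kron_outer:
  assumes "j < n" "l < p"
  shows "vmul (n*p) v (kron p p M (outer u1 ones)) (j*p+l) = (\<Sum>i<n. v (i*p) * M i j)"
proof -
  have "vmul (n*p) v (kron p p M (outer u1 ones)) (j*p+l)
      = (\<Sum>i<n. \<Sum>m<p. v (i*p+m) * kron p p M (outer u1 ones) (i*p+m) (j*p+l))"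
    unfolding vmul_def by (rule sum_lessThan_mult)
  also have "\<dots> = (\<Sum>i<n. \<Sum>m<p. if m = 0 then v (i*p) * M i j else 0)"
    using assms(2) by (intro sum.cong refl) (auto simp: kron_def outer_def u1_def ones_def)
  finally show ?thesis
    using assms(2) by simp
qed

lemma mmul_diagm_diagm:
  assumes i: "i < n"
  shows "mmul n (mmul n (diagm a) (diagm b)) M i j = a i * b i * M i j"
proof -
  have "mmul n (diagm a) (diagm b) i k = (\<Sum>l<n. if l = i then (if i = k then a i * b i else 0) else 0)" for k
    unfolding mmul_def diagm_def by (rule sum.cong) auto
  then have "mmul n (mmul n (diagm a) (diagm b)) M i j = (\<Sum>k<n. if k = i then a i * b i * M i j else 0)"
    using i unfolding mmul_def by (intro sum.cong) auto
  then show ?thesis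
    using i by simp
qed

lemma vmul_ones_dsum:
  assumes j: "j < n" and l: "l < p"
  shows "vmul n ones (dsum 1 p (\<lambda>i _ m. w i m)) (j*p+l) = w j l"
proof -
  have "vmul n ones (dsum 1 p (\<lambda>i _ m. w i m)) (j*p+l) = (\<Sum>i<n. if i = j then w j l else 0)"
    unfolding vmul_def ones_def dsum_def by (rule sum.cong) (use l in auto)
  then show ?thesis
    using j by simp
qed

lemma vmul_ones_kron:
  assumes j: "j < n" and l: "l < p"
  shows "vmul n ones (kron 1 p (diagm d) (\<lambda>_ _. 1)) (j*p+l) = d j"
proof -
  have "vmul n ones (kron 1 p (diagm d) (\<lambda>_ _. 1)) (j*p+l) = (\<Sum>i<n. if i = j then d j else 0)"
    unfolding vmul_def ones_def kron_def diagm_def by (rule sum.cong) (use l in auto)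
  then show ?thesis
    using j by simp
qed

text \<open>The \<open>(j p + l)\<close>-th column of the stacked matrix inequality is the drift condition for node
  \<open>j\<close> in phase \<open>l\<close>.\<close>

lemma stacked_ineq_component:
  fixes P :: "nat \<Rightarrow> mat"
  assumes j: "j < n" and l: "l < p"
    and ineq: "vmul (n*p) v (madd (dsum p p (\<lambda>i. mT (offdiag (P i))))
                            (kron p p (mmul n (mmul n (diagm J) (diagm beta)) A) (outer u1 ones))) (j*p+l)
         + vmul n ones (dsum 1 p (\<lambda>i. \<lambda>_ m. exitvec p (P i) m)) (j*p+l)
         + vmul n ones (kron 1 p (diagm delta) (\<lambda>_ _. 1)) (j*p+l)
         < vmul (n*p) v (dsum p p (\<lambda>i. dsum 1 1 (\<lambda>l _ _. d i l))) (j*p+l)"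
  shows "(\<Sum>m<p. v (j*p+m) * offdiag (P j) l m) + (\<Sum>i<n. v (i*p) * (J i * beta i * A i j))
       + exitvec p (P j) l + delta j < v (j*p+l) * d j l"
proof -
  have "(\<Sum>i<n. v (i*p) * mmul n (mmul n (diagm J) (diagm beta)) A i j) = (\<Sum>i<n. v (i*p) * (J i * beta i * A i j))"
    by (intro sum.cong refl) (simp add: mmul_diagm_diagm)
  then show ?thesis
    using ineq unfolding vmul_dsum_diag[OF j l] vmul_madd vmul_dsum[OF j l] vmul_kron_outer[OF j l] vmul_ones_dsum[OF j l]
      vmul_ones_kron[OF j l]
    by (simp add: mT_def)
qed

lemma sum_initial_phase:
  fixes p :: nat and v :: "nat \<Rightarrow> real"
  assumes "0 < p"
  shows "(\<Sum>c<n*p. v c * (if c div p \<in> I \<and> c mod p = 0 then 1 else 0)) = (\<Sum>i<n. if i \<in> I then v (i*p) else 0)"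
proof -
  have "(\<Sum>c<n*p. v c * (if c div p \<in> I \<and> c mod p = 0 then 1 else 0))
      = (\<Sum>i<n. \<Sum>m<p. v (i*p+m) * (if (i*p+m) div p \<in> I \<and> (i*p+m) mod p = 0 then 1 else 0))"
    by (rule sum_lessThan_mult)
  also have "\<dots> = (\<Sum>i<n. \<Sum>m<p. if m = 0 then (if i \<in> I then v (i*p) else 0) else 0)"
    by (intro sum.cong refl) auto
  finally show ?thesis
    using assms by simp
qed

lemma posynomial_fun_nonneg:
  assumes "posynomial_fun q F" "\<forall>k<q. x k > 0"
  shows "0 \<le> F x"
proof -
  obtain cs :: "(real \<times> (nat \<Rightarrow> real)) list" where cs: "\<forall>(c,a)\<in>set cs. c > 0"
    "\<forall>x. (\<forall>k<q. x k > 0) \<longrightarrow> F x = (\<Sum>(c,a)\<leftarrow>cs. c * (\<Prod>k<q. x k powr a k))"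
    using assms(1) unfolding posynomial_fun_def by blast
  have "0 \<le> (\<Sum>(c,a)\<leftarrow>cs. c * (\<Prod>k<q. x k powr a k))"
    using cs(1) by (intro sum_list_nonneg) (auto intro!: mult_nonneg_nonneg prod_nonneg)
  then show ?thesis
    using cs(2) assms(2) by simp
qed

section \<open>The resource allocation problem\<close>

text \<open>Symmetry of \<open>A\<close>, the monomial and posynomial structure of \<open>\<Pi>\<^sub>i\<close> and of the costs, and
  invertibility of \<open>\<Pi>\<^sub>i\<close> are what make the allocation problem a geometric program; the feasibility
  claim itself only needs nonnegativity of the rates.\<close>

theorem theorem2:
  fixes n p :: nat
    and A :: mat
    and delta beta betalo betahi :: "nat \<Rightarrow> real"
    and q :: "nat \<Rightarrow> nat"
    and Pm :: "nat \<Rightarrow> (nat \<Rightarrow> real) \<Rightarrow> mat"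
    and gamma gammalo gammahi :: "nat \<Rightarrow> nat \<Rightarrow> real"
    and I0 :: "nat set"
    and Cbar lambdabar :: real
    and g :: "nat \<Rightarrow> real \<Rightarrow> real"
    and h :: "nat \<Rightarrow> (nat \<Rightarrow> real) \<Rightarrow> real"
    and kappa alpha :: "nat \<Rightarrow> nat \<Rightarrow> real"
    and v :: "nat \<Rightarrow> real"
  assumes p_pos: "0 < p"
    and A_sym: "\<forall>i<n. \<forall>j<n. A i j = A j i"
    and A_01: "\<forall>i<n. \<forall>j<n. A i j = 0 \<or> A i j = 1"
    and A_loop: "\<forall>i<n. A i i = 0"
    and delta_pos: "\<forall>i<n. delta i > 0"
    and I0_sub: "I0 \<subseteq> {..<n}"
    and Cbar_pos: "Cbar > 0"
    and lambdabar_pos: "lambdabar > 0"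
    and beta_int: "\<forall>i<n. 0 < betalo i \<and> betalo i \<le> betahi i"
    and gamma_box: "\<forall>i<n. \<forall>k<q i. 0 < gammalo i k \<and> gammalo i k \<le> gammahi i k"
    and w_posy: "\<forall>i<n. \<forall>l<p. posynomial_fun (q i) (\<lambda>\<gamma>. exitvec p (Pm i \<gamma>) l)"
    and O_posy: "\<forall>i<n. \<forall>l<p. \<forall>m<p. l \<noteq> m \<longrightarrow> posynomial_fun (q i) (\<lambda>\<gamma>. Pm i \<gamma> l m)"
    and D_mono: "\<forall>i<n. \<forall>l<p. monomial_fun (q i) (\<lambda>\<gamma>. - Pm i \<gamma> l l)"
    and g_posy: "\<forall>i<n. posynomial_fun 1 (\<lambda>x. g i (x 0))"
    and h_posy: "\<forall>i<n. posynomial_fun (q i) (h i)"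
    and Pi_inv: "\<forall>i<n. invertible_mat p (Pm i (gamma i))"
    and kappa_pos: "\<forall>i<n. \<forall>l<p. kappa i l > 0"
    and alpha_pos: "\<forall>i<n. \<forall>l<p. alpha i l > 0"
    and kappa_bound: "\<forall>i<n. \<forall>l<p. \<forall>\<gamma>. (\<forall>k<q i. gammalo i k \<le> \<gamma> k \<and> \<gamma> k \<le> gammahi i k) \<longrightarrow>
         kappa i l * (- Pm i \<gamma> l l) powr alpha i l \<le> (- Pm i \<gamma> l l) + delta i"
    and v_pos: "\<forall>c<n*p. v c > 0"
    and main_ineq: "\<forall>c<n*p.
         vmul (n*p) v (madd (dsum p p (\<lambda>i. mT (offdiag (Pm i (gamma i)))))
                            (kron p p (mmul n (mmul n (diagm (\<lambda>i. if i \<in> I0 then 0 else 1)) (diagm beta)) A)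
                                      (outer u1 ones))) c
         + vmul n ones (dsum 1 p (\<lambda>i. \<lambda>_ m. exitvec p (Pm i (gamma i)) m)) c
         + vmul n ones (kron 1 p (diagm delta) (\<lambda>_ _. 1)) c
         < vmul (n*p) v (dsum p p (\<lambda>i. dsum 1 1 (\<lambda>l _ _. kappa i l * (- Pm i (gamma i) l l) powr alpha i l))) c"
    and budget: "(\<Sum>i<n. g i (beta i) + h i (gamma i)) \<le> Cbar"
    and v_init: "(\<Sum>c<n*p. v c * (if c div p \<in> I0 \<and> c mod p = 0 then 1 else 0)) < lambdabar + real (card I0)"
    and beta_bd: "\<forall>i<n. betalo i \<le> beta i \<and> beta i \<le> betahi i"
    and gamma_bd: "\<forall>i<n. \<forall>k<q i. gammalo i k \<le> gamma i k \<and> gamma i k \<le> gammahi i k"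
  shows "(\<forall>i<n. betalo i \<le> beta i \<and> beta i \<le> betahi i)
       \<and> (\<forall>i<n. \<forall>k<q i. gammalo i k \<le> gamma i k \<and> gamma i k \<le> gammahi i k)
       \<and> (\<Sum>i<n. g i (beta i) + h i (gamma i)) \<le> Cbar
       \<and> (\<exists>L. ((\<lambda>t. sir_ERem n p A beta delta (\<lambda>i. Pm i (gamma i)) I0 t) \<longlongrightarrow> L) at_top
              \<and> L - real (card I0) \<le> lambdabar)"
proof -
  have gamma_pos: "\<forall>k<q i. gamma i k > 0" if "i < n" for i
    using that gamma_box gamma_bd by (meson less_le_trans)
  interpret sir_drift n p A beta delta "\<lambda>i. Pm i (gamma i)" I0 v
  proof
    show "0 < p" "I0 \<subseteq> {..<n}"
      by (fact p_pos I0_sub)+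
    show "A i j \<ge> 0" if "i < n" "j < n" for i j
      using A_01 that by fastforce
    show "beta i \<ge> 0" if "i < n" for i
      using beta_int beta_bd that by (meson less_le_trans less_imp_le)
    show "delta i \<ge> 0" if "i < n" for i
      using delta_pos that by (simp add: less_imp_le)
    show "v c \<ge> 0" if "c < n * p" for c
      using v_pos that by (simp add: less_imp_le)
    show "Pm i (gamma i) l m \<ge> 0" if "i < n" "l < p" "m < p" "l \<noteq> m" for i l m
      using that O_posy gamma_pos by (intro posynomial_fun_nonneg[of "q i" "\<lambda>\<gamma>. Pm i \<gamma> l m"]) auto
    show "exitvec p (Pm i (gamma i)) l \<ge> 0" if "i < n" "l < p" for i l
      using that w_posy gamma_pos by (intro posynomial_fun_nonneg[of "q i" "\<lambda>\<gamma>. exitvec p (Pm i \<gamma>) l"]) auto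
    fix j l assume j: "j < n" and l: "l < p"
    have "kappa j l * (- Pm j (gamma j) l l) powr alpha j l \<le> - Pm j (gamma j) l l + delta j"
      using kappa_bound j l gamma_bd by simp
    then have "v (j*p+l) * (kappa j l * (- Pm j (gamma j) l l) powr alpha j l)
        \<le> v (j*p+l) * (- Pm j (gamma j) l l + delta j)"
      using v_pos index_less[OF j l] by (simp add: mult_left_mono)
    then show "(\<Sum>m<p. v (j*p+m) * offdiag (Pm j (gamma j)) l m)
        + (\<Sum>i<n. v (i*p) * ((if i \<in> I0 then 0 else 1) * beta i * A i j))
        + exitvec p (Pm j (gamma j)) l + delta j \<le> v (j*p+l) * (- Pm j (gamma j) l l + delta j)"
      using stacked_ineq_component[OF j l main_ineq[rule_format, OF index_less[OF j l]]] by linarith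
  qed
  obtain L where "((\<lambda>t. sir_ERem n p A beta delta (\<lambda>i. Pm i (gamma i)) I0 t) \<longlongrightarrow> L) at_top"
    and "L \<le> (\<Sum>i<n. if i \<in> I0 then v (i*p) else 0)"
    using expected_removed_limit_le by blast
  then show ?thesis
    using beta_bd gamma_bd budget v_init unfolding sum_initial_phase[OF p_pos] by auto
qed

end
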